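(* Consider quantitative group testing with $n$ items, each independently defective with probability $\gamma$ (the prevalence), where the test matrix $\boldsymbol{A}$ is the adjacency (parity-check) matrix of a regular $(d_\mathsf{v},d_\mathsf{c})$ bipartite graph (each item/variable node (VN) participates in $d_\mathsf{v}$ tests/constraint nodes (CNs), each test contains $d_\mathsf{c}$ items), and each test returns the exact number of defective items it contains. Decode with the following peeling decoder: initially all items are unresolved and each CN $\mathsf{c}_i$ holds its test result $s_i$; at each iteration, for every CN $\mathsf{c}_i$ of the residual graph with current residual degree $d^{(\ell)}_{\mathsf{c}_i}$ and residual syndrome $s_i^{(\ell)}$: if $s_i^{(\ell)}=0$, all its connected VNs are declared non-defective and their edges are removed; if $s_i^{(\ell)}=d^{(\ell)}_{\mathsf{c}_i}$, all its connected VNs are declared defective, $1$ is subtracted from the residual syndrome of each of their neighboring CNs, and their edges are removed; decoding stops when the residual graph is empty or no edge is removed in an iteration. Let $p_0^{(\ell)}$ (resp. $p_1^{(\ell)}$) be the probability that a message from a non-defective (resp. defective) VN to a CN at iteration $\ell$ is unresolved, and let $q_0^{(\ell)}$ (resp. $q_1^{(\ell)}$) be the probability that a message from a CN to a non-defective (resp. defective) VN at iteration $\ell$ is resolved. Then these quantities are given by the density evolution equations \begin{align*} q^{(\ell)}_0&=\sum_{i=0}^{d_\mathsf{c}-1}\binom{d_\mathsf{c}-1}{i}\gamma^i(1-\gamma)^{d_\mathsf{c}-1-i}\left(1-p^{(\ell-1)}_1\right)^i,\\ q^{(\ell)}_1&=\sum_{i=0}^{d_\mathsf{c}-1}\binom{d_\mathsf{c}-1}{i}\gamma^i(1-\gamma)^{d_\mathsf{c}-1-i}\left(1-p^{(\ell-1)}_0\right)^{d_\mathsf{c}-1-i},\\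 p^{(\ell)}_0&=\left(1-q^{(\ell-1)}_0\right)^{d_\mathsf{v}-1},\\ p^{(\ell)}_1&=\left(1-q^{(\ell-1)}_1\right)^{d_\mathsf{v}-1}. \end{align*}
   Context: Items are represented by $\boldsymbol{x}\in\{0,1\}^n$ with $x_j=1$ iff item $j$ is defective; the $m\times n$ test matrix $\boldsymbol{A}=(a_{i,j})$ has $a_{i,j}=1$ iff item $j$ is in test $i$, and the syndrome is $s_i=\sum_j x_j a_{i,j}$. The bipartite graph has an edge between VN $j$ and CN $i$ iff $a_{i,j}=1$. Density evolution refers to the standard asymptotic (large $n$, random regular graph) analysis of message-passing/peeling decoding, in which the messages along edges are tracked as probabilities; a message on an edge is "resolved" when the corresponding item has been identified by the decoder. *)

theory Defs
  imports "HOL-Probability.Probability"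
begin

text \<open>Computation tree (tree-like local neighbourhood) of the regular (dv,dc) graph. A VN at position w has CN children w@[j] (j < dv-1);
a CN at position u has VN children u@[k] (k < dc-1). The function x gives the
defect status of the VN at each position (values at CN positions are unused).

vmsg dv dc l x w: the message from the VN at w to its parent CN at iteration l is
UNRESOLVED (the item has not been identified by any of its other CNs).
cmsg dv dc l x u b: the message from the CN at u to its parent VN (whose status is b)
at iteration l is RESOLVED, following the peeling rules: residual syndrome 0
(all other defective neighbours resolved) resolves a non-defective target;
residual syndrome = residual degree (all other non-defective neighbours resolved)
resolves a defective target.\<close>

fun vmsg :: "nat \<Rightarrow> nat \<Rightarrow> nat \<Rightarrow> (nat list \<Rightarrow> bool) \<Rightarrow> nat list \<Rightarrow> bool"
and cmsg :: "nat \<Rightarrow> nat \<Rightarrow> nat \<Rightarrow> (nat list \<Rightarrow> bool) \<Rightarrow> nat list \<Rightarrow> bool \<Rightarrow> bool" where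
  "vmsg dv dc 0 x w = True"
| "vmsg dv dc (Suc l) x w = (\<forall>j<dv-1. \<not> cmsg dv dc l x (w @ [j]) (x w))"
| "cmsg dv dc 0 x u b = False"
| "cmsg dv dc (Suc l) x u b =
     (if b then (\<forall>k<dc-1. \<not> x (u @ [k]) \<longrightarrow> \<not> vmsg dv dc l x (u @ [k]))
      else (\<forall>k<dc-1. x (u @ [k]) \<longrightarrow> \<not> vmsg dv dc l x (u @ [k])))"

end

theory Submission
  imports Defs
begin

text \<open>
  Labels of the computation tree are i.i.d., so the subtrees below distinct children of a node
  carry disjoint families of labels: they are independent, and each is distributed like the whole
  tree. A VN message at iteration \<open>l + 1\<close> is unresolved iff none of its \<open>dv - 1\<close> CN children
  resolves it, which gives \<open>(1 - q)^(dv-1)\<close>. A CN message towards a VN of status \<open>b\<close> is resolved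
  iff none of its \<open>dc - 1\<close> VN children has status \<open>\<not> b\<close> and is still unresolved; splitting off
  the status of each child gives \<open>(1 - P(\<not> b) p)^(dc-1)\<close>, which is the binomial sum of the
  statement evaluated by the binomial theorem.
\<close>

abbreviation iid_tree :: "'a pmf \<Rightarrow> (nat list \<Rightarrow> 'a) measure" where
  "iid_tree P \<equiv> PiM UNIV (\<lambda>_::nat list. measure_pmf P)"

lemma space_iid_tree [simp]: "space (iid_tree P) = UNIV"
  by (auto simp: space_PiM PiE_def extensional_def)

lemma prob_space_iid_tree: "prob_space (iid_tree P)"
  by (rule prob_space_PiM) (simp add: prob_space_measure_pmf)

lemma measurable_iid_tree_component [measurable]:
  "(\<lambda>x. x w) \<in> measurable (iid_tree P) (count_space UNIV)"
  using measurable_component_singleton[of w UNIV "\<lambda>_. measure_pmf P"]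
  by (simp add: measurable_cong_sets[OF refl sets_measure_pmf_count_space])

lemma measurable_iid_tree_subtree: "(\<lambda>x v. x (u @ v)) \<in> measurable (iid_tree P) (iid_tree P)"
  by (rule measurable_PiM_single') (auto intro!: measurable_component_singleton)

lemma distr_iid_tree_subtree: "distr (iid_tree P) (iid_tree P) (\<lambda>x v. x (u @ v)) = iid_tree P"
  using distr_PiM_reindex[of UNIV "\<lambda>_. measure_pmf P" "\<lambda>v. u @ v" UNIV]
  by (simp add: prob_space_measure_pmf inj_on_def restrict_UNIV)

lemma measure_iid_tree_subtree:
  assumes "Measurable.pred (iid_tree P) C"
  shows "measure (iid_tree P) {x. C (\<lambda>v. x (u @ v))} = measure (iid_tree P) {x. C x}"
proof -
  have "measure (iid_tree P) {x. C x} =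
        measure (distr (iid_tree P) (iid_tree P) (\<lambda>x v. x (u @ v))) {x. C x}"
    by (simp only: distr_iid_tree_subtree)
  also have "\<dots> = measure (iid_tree P) {x. C (\<lambda>v. x (u @ v))}"
    using assms by (subst measure_distr[OF measurable_iid_tree_subtree]) (auto simp: pred_def)
  finally show ?thesis ..
qed

lemma measure_iid_tree_not:
  assumes "Measurable.pred (iid_tree P) C"
  shows "measure (iid_tree P) {x. \<not> C x} = 1 - measure (iid_tree P) {x. C x}"
proof -
  interpret prob_space "iid_tree P" by (rule prob_space_iid_tree)
  have "{x. \<not> C x} = space (iid_tree P) - {x. C x}" by auto
  with assms prob_compl[of "{x. C x}"] show ?thesis by (simp add: pred_def)
qed

lemma indep_vars_iid_tree_components:
  "prob_space.indep_vars (iid_tree P) (\<lambda>_. measure_pmf P) (\<lambda>w x. x w) UNIV"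
proof -
  interpret prob_space "iid_tree P" by (rule prob_space_iid_tree)
  have "distr (iid_tree P) (measure_pmf P) (\<lambda>x. x w) = measure_pmf P" for w
    by (rule distr_PiM_component) (auto simp: prob_space_measure_pmf)
  then show ?thesis
    by (subst indep_vars_iff_distr_eq_PiM) (auto simp: restrict_UNIV)
qed

lemma indep_vars_iid_tree_subtrees:
  "prob_space.indep_vars (iid_tree P) (\<lambda>_. iid_tree P) (\<lambda>j x v. x (j # v)) UNIV"
proof -
  interpret prob_space "iid_tree P" by (rule prob_space_iid_tree)
  let ?K = "\<lambda>j::nat. range (Cons j)"
  have "indep_vars (\<lambda>j. PiM (?K j) (\<lambda>_. measure_pmf P)) (\<lambda>j x. restrict x (?K j)) UNIV"
    using indep_vars_restrict[OF indep_vars_iid_tree_components, of UNIV ?K]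
    by (auto simp: disjoint_family_on_def)
  moreover have "(\<lambda>r v. r (j # v)) \<in> measurable (PiM (?K j) (\<lambda>_. measure_pmf P)) (iid_tree P)" for j
    by (rule measurable_PiM_single', rule measurable_component_singleton) (auto simp: space_PiM)
  ultimately have "indep_vars (\<lambda>_. iid_tree P) (\<lambda>j x v. restrict x (?K j) (j # v)) UNIV"
    by (rule indep_vars_compose2)
  then show ?thesis by simp
qed

lemma measure_iid_tree_all_subtrees:
  assumes C: "Measurable.pred (iid_tree P) C"
  shows "measure (iid_tree P) {x. \<forall>j<m. C (\<lambda>v. x (j # v))} = measure (iid_tree P) {x. C x} ^ m"
proof (cases "m = 0")
  case True
  then show ?thesis using prob_space.prob_space[OF prob_space_iid_tree] by simp
next
  case False
  interpret prob_space "iid_tree P" by (rule prob_space_iid_tree)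
  let ?E = "\<lambda>j. (\<lambda>x v. x (j # v)) -` {x. C x} \<inter> space (iid_tree P)"
  have prob_E: "prob {x. C (\<lambda>v. x (j # v))} = prob {x. C x}" for j
    using measure_iid_tree_subtree[OF C, of "[j]"] by simp
  have "{x. \<forall>j<m. C (\<lambda>v. x (j # v))} = (\<Inter>j\<in>{..<m}. ?E j)"
    using False by auto
  also have "prob \<dots> = (\<Prod>j\<in>{..<m}. prob (?E j))"
    using False C by (intro indep_varsD[OF indep_vars_iid_tree_subtrees]) (auto simp: pred_def)
  finally show ?thesis by (simp add: prob_E)
qed

lemma measure_iid_tree_node: "measure (iid_tree P) {x. x w = a} = pmf P a"
proof -
  have "pmf P a = measure (distr (iid_tree P) (measure_pmf P) (\<lambda>x. x w)) {a}"
    by (subst distr_PiM_component) (auto simp: prob_space_measure_pmf measure_pmf_single)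
  also have "\<dots> = measure (iid_tree P) {x. x w = a}"
    by (subst measure_distr) (auto intro!: measurable_component_singleton simp: vimage_def)
  finally show ?thesis ..
qed

lemma measure_iid_tree_node_split:
  assumes C: "Measurable.pred (iid_tree P) C"
  shows "measure (iid_tree P) {x. x w = a \<and> C (x(w := a))} =
         pmf P a * measure (iid_tree P) {x. C (x(w := a))}"
proof -
  interpret prob_space "iid_tree P" by (rule prob_space_iid_tree)
  let ?M = "\<lambda>_::nat list. measure_pmf P"
  let ?A = "{r \<in> space (PiM {w} ?M). r w = a}"
  let ?B = "{r \<in> space (PiM (- {w}) ?M). C (r(w := a))}"
  have "?A \<in> sets (PiM {w} ?M)"
    using measurable_component_singleton[of w "{w}" ?M]
    by (auto simp: measurable_cong_sets[OF refl sets_measure_pmf_count_space] pred_def)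
  moreover have "(\<lambda>r. r(w := a)) \<in> measurable (PiM (- {w}) ?M) (iid_tree P)"
    by (rule measurable_fun_upd[where J = "- {w}"]) auto
  then have "?B \<in> sets (PiM (- {w}) ?M)"
    using measurable_compose[OF _ C] by (auto simp: pred_def)
  moreover have "indep_var (PiM {w} ?M) (\<lambda>x. restrict x {w}) (PiM (- {w}) ?M) (\<lambda>x. restrict x (- {w}))"
    using indep_var_restrict[OF indep_vars_iid_tree_components, of "{w}" "- {w}"] by simp
  ultimately have "prob ((\<lambda>x. (restrict x {w}, restrict x (- {w}))) -` (?A \<times> ?B) \<inter> space (iid_tree P)) =
      prob ((\<lambda>x. restrict x {w}) -` ?A \<inter> space (iid_tree P)) *
      prob ((\<lambda>x. restrict x (- {w})) -` ?B \<inter> space (iid_tree P))"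
    by (intro indep_varD)
  moreover have "(restrict x (- {w}))(w := a) = x(w := a)" for x
    by (auto simp: fun_eq_iff)
  ultimately show ?thesis
    by (simp add: vimage_def space_PiM measure_iid_tree_node)
qed

lemma
  shows vmsg_append: "vmsg dv dc l x (u @ w) = vmsg dv dc l (\<lambda>v. x (u @ v)) w"
    and cmsg_append: "cmsg dv dc l x (u @ w) b = cmsg dv dc l (\<lambda>v. x (u @ v)) w b"
  by (induction l arbitrary: w b) auto

lemma
  shows measurable_vmsg [measurable]: "Measurable.pred (iid_tree P) (\<lambda>x. vmsg dv dc l x w)"
    and measurable_cmsg [measurable]: "Measurable.pred (iid_tree P) (\<lambda>x. cmsg dv dc l x u b)"
proof (induction l arbitrary: w u b)
  case (Suc l)
  note Suc.IH [measurable]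
  { case 1 show ?case by simp measurable }
  { case 2 show ?case by simp measurable }
qed simp_all

lemma measure_vmsg_Suc:
  "measure (iid_tree P) {x. vmsg dv dc (Suc l) (x([] := b)) []} =
   (1 - measure (iid_tree P) {x. cmsg dv dc l x [] b}) ^ (dv - 1)"
proof -
  have "{x. vmsg dv dc (Suc l) (x([] := b)) []} = {x. \<forall>j<dv-1. \<not> cmsg dv dc l (\<lambda>v. x (j # v)) [] b}"
    using cmsg_append[of dv dc l _ "[_]" "[]"] by simp
  also have "measure (iid_tree P) \<dots> = measure (iid_tree P) {x. \<not> cmsg dv dc l x [] b} ^ (dv - 1)"
    by (rule measure_iid_tree_all_subtrees) measurable
  finally show ?thesis by (simp add: measure_iid_tree_not)
qed

lemma measure_cmsg_Suc:
  "measure (iid_tree P) {x. cmsg dv dc (Suc l) x [] b} =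
   (1 - pmf P (\<not> b) * measure (iid_tree P) {x. vmsg dv dc l (x([] := \<not> b)) []}) ^ (dc - 1)"
proof -
  define U where "U x \<longleftrightarrow> x [] = (\<not> b) \<and> vmsg dv dc l x []" for x
  have [measurable]: "Measurable.pred (iid_tree P) U"
    unfolding U_def by measurable
  have "measure (iid_tree P) {x. U x} =
        measure (iid_tree P) {x. x [] = (\<not> b) \<and> vmsg dv dc l (x([] := \<not> b)) []}"
    by (rule arg_cong[where f = "measure _"]) (auto simp: U_def fun_upd_idem)
  also have "\<dots> = pmf P (\<not> b) * measure (iid_tree P) {x. vmsg dv dc l (x([] := \<not> b)) []}"
    by (rule measure_iid_tree_node_split) measurable
  finally have prob_U: "measure (iid_tree P) {x. U x} = \<dots>" .
  have "{x. cmsg dv dc (Suc l) x [] b} = {x. \<forall>k<dc-1. \<not> U (\<lambda>v. x (k # v))}"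
    using vmsg_append[of dv dc l _ "[_]" "[]"] by (cases b) (auto simp: U_def)
  also have "measure (iid_tree P) \<dots> = measure (iid_tree P) {x. \<not> U x} ^ (dc - 1)"
    by (rule measure_iid_tree_all_subtrees) measurable
  finally show ?thesis by (simp add: measure_iid_tree_not prob_U)
qed

lemma binomial_pgf:
  fixes g a :: "'a::comm_ring_1"
  shows "(\<Sum>i=0..n. of_nat (n choose i) * g^i * (1-g)^(n-i) * a^i) = (g * a + (1 - g)) ^ n"
  by (simp add: binomial_ring atLeast0AtMost power_mult_distrib mult_ac)

lemma binomial_pgf_complement:
  fixes g a :: "'a::comm_ring_1"
  shows "(\<Sum>i=0..n. of_nat (n choose i) * g^i * (1-g)^(n-i) * a^(n-i)) = (g + (1 - g) * a) ^ n"
  by (simp add: binomial_ring atLeast0AtMost power_mult_distrib mult_ac)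

theorem proposition1:
  fixes dv dc :: nat and \<gamma> :: real
  assumes "dv \<ge> 1" and "dc \<ge> 1" and "0 \<le> \<gamma>" and "\<gamma> \<le> 1"
  defines "p \<equiv> \<lambda>b l. measure (PiM UNIV (\<lambda>_::nat list. measure_pmf (bernoulli_pmf \<gamma>))) {x \<in> space (PiM UNIV (\<lambda>_::nat list. measure_pmf (bernoulli_pmf \<gamma>))). vmsg dv dc l (x([] := b)) []}"
      and "q \<equiv> \<lambda>b l. measure (PiM UNIV (\<lambda>_::nat list. measure_pmf (bernoulli_pmf \<gamma>))) {x \<in> space (PiM UNIV (\<lambda>_::nat list. measure_pmf (bernoulli_pmf \<gamma>))). cmsg dv dc l x [] b}"
  shows "\<forall>l\<ge>1.
     q False l = (\<Sum>i=0..dc-1. real (dc-1 choose i) * \<gamma>^i * (1-\<gamma>)^(dc-1-i) * (1 - p True (l-1))^i) \<and>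
     q True l = (\<Sum>i=0..dc-1. real (dc-1 choose i) * \<gamma>^i * (1-\<gamma>)^(dc-1-i) * (1 - p False (l-1))^(dc-1-i)) \<and>
     p False l = (1 - q False (l-1))^(dv-1) \<and>
     p True l = (1 - q True (l-1))^(dv-1)"
proof -
  have p_Suc: "p b (Suc k) = (1 - q b k) ^ (dv - 1)" for b k
    unfolding p_def q_def by (simp del: vmsg.simps cmsg.simps add: measure_vmsg_Suc)
  have q_Suc: "q b (Suc k) = (1 - pmf (bernoulli_pmf \<gamma>) (\<not> b) * p (\<not> b) k) ^ (dc - 1)" for b k
    unfolding p_def q_def by (simp del: vmsg.simps cmsg.simps add: measure_cmsg_Suc)
  have q_False: "q False (Suc k) = (\<gamma> * (1 - p True k) + (1 - \<gamma>)) ^ (dc - 1)" for k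
    using q_Suc[of False] assms(3,4) by (simp add: algebra_simps)
  have q_True: "q True (Suc k) = (\<gamma> + (1 - \<gamma>) * (1 - p False k)) ^ (dc - 1)" for k
    using q_Suc[of True] assms(3,4) by (simp add: algebra_simps)
  show ?thesis
    unfolding One_nat_def
    by (intro allI impI, drule Suc_le_D, clarify)
      (simp only: diff_Suc_Suc diff_zero p_Suc q_False q_True binomial_pgf binomial_pgf_complement One_nat_def)
qed

end
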